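(* Let $f\in\mathcal{A}$ and define $\hat f(u):=f(u)-uf(1)$ for $0\le u\le1$. Then (i) $\hat f\in\mathcal{B}$; (ii) $A_{0,1}(\hat f)=A_{0,1}(f)$; (iii) $\Gamma_{0,1}(\hat f)\le\Gamma_{0,1}(f)$, with equality if and only if $f(1)=0$.
   Context: $\mathcal{A}$ is the set of absolutely continuous $f:[0,1]\to\mathbb{R}$ with $f(0)=0$ and $\int_0^1f'(u)^2du<\infty$; $\mathcal{B}:=\{f\in\mathcal{A}:f(1)=0\}$. For $f\in\mathcal A$, $\overline f,\underline f$ are the least concave majorant and greatest convex minorant of $f$ on $[0,1]$; $A_{0,1}(f):=\int_0^1(\overline f-\underline f)(u)\,du$ and $\Gamma_{0,1}(f):=\int_0^1f'(u)^2du$. *)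

theory Defs
  imports "HOL-Analysis.Analysis"
begin

definition abs_cont_01 :: "(real \<Rightarrow> real) \<Rightarrow> bool" where
  "abs_cont_01 f \<longleftrightarrow>
     (\<forall>\<epsilon>>0. \<exists>\<delta>>0. \<forall>(n::nat) (a::nat \<Rightarrow> real) (b::nat \<Rightarrow> real).
        (\<forall>i<n. 0 \<le> a i \<and> a i \<le> b i \<and> b i \<le> 1) \<longrightarrow>
        (\<forall>i<n. \<forall>j<n. i \<noteq> j \<longrightarrow> b i \<le> a j \<or> b j \<le> a i) \<longrightarrow>
        (\<Sum>i<n. b i - a i) < \<delta> \<longrightarrow>
        (\<Sum>i<n. \<bar>f (b i) - f (a i)\<bar>) < \<epsilon>)"

text \<open>Gamma_{0,1}(f) = integral over [0,1] of f'(u)^2 (f' exists a.e. for AC f).\<close>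
definition Gamma01 :: "(real \<Rightarrow> real) \<Rightarrow> real" where
  "Gamma01 f = integral {0..1} (\<lambda>u. (deriv f u)\<^sup>2)"

definition classA :: "(real \<Rightarrow> real) set" where
  "classA = {f. abs_cont_01 f \<and> f 0 = 0 \<and> (\<lambda>u. (deriv f u)\<^sup>2) integrable_on {0..1}}"

definition classB :: "(real \<Rightarrow> real) set" where
  "classB = {f \<in> classA. f 1 = 0}"

definition lcm01 :: "(real \<Rightarrow> real) \<Rightarrow> real \<Rightarrow> real" where
  "lcm01 f u = Inf {g u | g. concave_on {0..1} g \<and> (\<forall>x\<in>{0..1}. f x \<le> g x)}"

definition gcm01 :: "(real \<Rightarrow> real) \<Rightarrow> real \<Rightarrow> real" where
  "gcm01 f u = Sup {g u | g. convex_on {0..1} g \<and> (\<forall>x\<in>{0..1}. g x \<le> f x)}"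

definition A01 :: "(real \<Rightarrow> real) \<Rightarrow> real" where
  "A01 f = integral {0..1} (\<lambda>u. lcm01 f u - gcm01 f u)"

end

theory Submission
  imports Defs
begin

text \<open>Subtracting the chord \<open>u f(1)\<close> preserves absolute continuity and \<open>f(0) = 0\<close>, and it shifts
  every concave majorant and every convex minorant by the same linear function, so the area between
  the two hulls does not change. For the energy, an absolutely continuous \<open>f\<close> is the difference of
  two continuous monotone functions (its variation function and the variation minus \<open>f\<close>), hence
  differentiable almost everywhere by Lebesgue's theorem, whose proof rests on the Vitali covering
  theorem. A gauge argument then gives \<open>\<integral> f' = f(1)\<close>, and expanding the square yields
  \<open>\<integral> (f' - f(1))\<^sup>2 = \<integral> f'\<^sup>2 - f(1)\<^sup>2\<close>.\<close>

section \<open>Absolutely continuous functions and their variation\<close>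

definition nonoverlapping_intervals ::
    "real \<Rightarrow> real \<Rightarrow> 'i set \<Rightarrow> ('i \<Rightarrow> real) \<Rightarrow> ('i \<Rightarrow> real) \<Rightarrow> bool" where
  "nonoverlapping_intervals c d I a b \<longleftrightarrow> finite I \<and>
     (\<forall>i\<in>I. c \<le> a i \<and> a i \<le> b i \<and> b i \<le> d) \<and>
     (\<forall>i\<in>I. \<forall>j\<in>I. i \<noteq> j \<longrightarrow> b i \<le> a j \<or> b j \<le> a i)"

lemma nonoverlapping_intervals_mono:
  "nonoverlapping_intervals c d I a b \<Longrightarrow> c' \<le> c \<Longrightarrow> d \<le> d' \<Longrightarrow> nonoverlapping_intervals c' d' I a b"
  unfolding nonoverlapping_intervals_def by force

lemma nonoverlapping_intervals_split:
  assumes "nonoverlapping_intervals c d I a b" "c \<le> m" "m \<le> d"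
  shows "nonoverlapping_intervals c m I (\<lambda>i. min (a i) m) (\<lambda>i. min (b i) m)"
    and "nonoverlapping_intervals m d I (\<lambda>i. max (a i) m) (\<lambda>i. max (b i) m)"
  using assms unfolding nonoverlapping_intervals_def by (auto 0 3 intro: min.mono max.mono)

lemma sum_abs_diff_split_le:
  fixes f :: "real \<Rightarrow> real"
  shows "(\<Sum>i\<in>I. \<bar>f (b i) - f (a i)\<bar>) \<le>
    (\<Sum>i\<in>I. \<bar>f (min (b i) m) - f (min (a i) m)\<bar>) + (\<Sum>i\<in>I. \<bar>f (max (b i) m) - f (max (a i) m)\<bar>)"
proof -
  have minmax: "f (min x m) + f (max x m) = f x + f m" for x
    by (cases "x \<le> m") (auto simp: min_def max_def)
  have "\<bar>f (b i) - f (a i)\<bar> \<le> \<bar>f (min (b i) m) - f (min (a i) m)\<bar> + \<bar>f (max (b i) m) - f (max (a i) m)\<bar>" for i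
    using minmax[of "a i"] minmax[of "b i"] by linarith
  then show ?thesis
    by (simp add: sum.distrib[symmetric] sum_mono)
qed

lemma sum_lengths_le_measure:
  assumes "nonoverlapping_intervals c d I a b" "\<And>i. i \<in> I \<Longrightarrow> {a i<..<b i} \<subseteq> T" "T \<in> lmeasurable"
  shows "(\<Sum>i\<in>I. b i - a i) \<le> measure lebesgue T"
proof -
  have I: "finite I" "\<And>i. i \<in> I \<Longrightarrow> a i \<le> b i"
    and no: "\<And>i j. i \<in> I \<Longrightarrow> j \<in> I \<Longrightarrow> i \<noteq> j \<Longrightarrow> b i \<le> a j \<or> b j \<le> a i"
    using assms(1) unfolding nonoverlapping_intervals_def by auto
  have "(\<Sum>i\<in>I. b i - a i) = (\<Sum>i\<in>I. measure lebesgue {a i<..<b i})"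
    using I by (intro sum.cong) auto
  also have "\<dots> = measure lebesgue (\<Union>i\<in>I. {a i<..<b i})"
  proof (rule measure_finite_Union[symmetric])
    show "disjoint_family_on (\<lambda>i. {a i<..<b i}) I"
      unfolding disjoint_family_on_def using no by fastforce
  qed (use I in auto)
  also have "\<dots> \<le> measure lebesgue T"
    by (rule measure_mono_fmeasurable) (use assms(2,3) I in auto)
  finally show ?thesis .
qed

lemma sum_lengths_le:
  assumes "nonoverlapping_intervals c d I a b" "c \<le> d"
  shows "(\<Sum>i\<in>I. b i - a i) \<le> d - c"
proof -
  have "{a i<..<b i} \<subseteq> {c..d}" if "i \<in> I" for i
    using assms(1) that unfolding nonoverlapping_intervals_def by auto
  then show ?thesis
    using sum_lengths_le_measure[OF assms(1), of "{c..d}"] assms(2) by simp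
qed

lemma abs_cont_01E:
  fixes f :: "real \<Rightarrow> real"
  assumes "abs_cont_01 f" "e > 0"
  obtains d where "d > 0"
    "\<And>(I :: 'i set) a b. nonoverlapping_intervals 0 1 I a b \<Longrightarrow> (\<Sum>i\<in>I. b i - a i) < d \<Longrightarrow>
       (\<Sum>i\<in>I. \<bar>f (b i) - f (a i)\<bar>) < e"
proof -
  obtain d where "d > 0" and d: "\<forall>(n::nat) (a::nat \<Rightarrow> real) (b::nat \<Rightarrow> real).
        (\<forall>i<n. 0 \<le> a i \<and> a i \<le> b i \<and> b i \<le> 1) \<longrightarrow>
        (\<forall>i<n. \<forall>j<n. i \<noteq> j \<longrightarrow> b i \<le> a j \<or> b j \<le> a i) \<longrightarrow>
        (\<Sum>i<n. b i - a i) < d \<longrightarrow> (\<Sum>i<n. \<bar>f (b i) - f (a i)\<bar>) < e"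
    using assms unfolding abs_cont_01_def by blast
  show ?thesis
  proof (rule that[OF \<open>d > 0\<close>])
    fix I :: "'i set" and a b
    assume I: "nonoverlapping_intervals 0 1 I a b" and len: "(\<Sum>i\<in>I. b i - a i) < d"
    have "finite I"
      using I unfolding nonoverlapping_intervals_def by blast
    then obtain h where h: "bij_betw h {..<card I} I"
      using ex_bij_betw_nat_finite unfolding atLeast0LessThan by blast
    have hI: "i < card I \<Longrightarrow> h i \<in> I" for i
      using h unfolding bij_betw_def by blast
    have h_inj: "i < card I \<Longrightarrow> j < card I \<Longrightarrow> i \<noteq> j \<Longrightarrow> h i \<noteq> h j" for i j
      using h unfolding bij_betw_def inj_on_def by blast
    have "\<forall>i<card I. 0 \<le> a (h i) \<and> a (h i) \<le> b (h i) \<and> b (h i) \<le> 1"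
      using I hI unfolding nonoverlapping_intervals_def by simp
    moreover have "\<forall>i<card I. \<forall>j<card I. i \<noteq> j \<longrightarrow> b (h i) \<le> a (h j) \<or> b (h j) \<le> a (h i)"
      using I hI h_inj unfolding nonoverlapping_intervals_def by simp
    moreover have "(\<Sum>i<card I. b (h i) - a (h i)) < d"
      using len sum.reindex_bij_betw[OF h, of "\<lambda>i. b i - a i"] by simp
    ultimately have "(\<Sum>i<card I. \<bar>f (b (h i)) - f (a (h i))\<bar>) < e"
      using d[rule_format, of "card I" "\<lambda>i. a (h i)" "\<lambda>i. b (h i)"] by blast
    then show "(\<Sum>i\<in>I. \<bar>f (b i) - f (a i)\<bar>) < e"
      using sum.reindex_bij_betw[OF h, of "\<lambda>i. \<bar>f (b i) - f (a i)\<bar>"] by simp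
  qed
qed

lemma abs_cont_01I:
  fixes f :: "real \<Rightarrow> real"
  assumes "\<And>e. e > 0 \<Longrightarrow> \<exists>d>0. \<forall>(I :: nat set) a b. nonoverlapping_intervals 0 1 I a b \<longrightarrow>
    (\<Sum>i\<in>I. b i - a i) < d \<longrightarrow> (\<Sum>i\<in>I. \<bar>f (b i) - f (a i)\<bar>) < e"
  shows "abs_cont_01 f"
  unfolding abs_cont_01_def
proof (intro allI impI)
  fix e :: real
  assume "e > 0"
  then obtain d where "d > 0" and d: "\<forall>(I :: nat set) a b. nonoverlapping_intervals 0 1 I a b \<longrightarrow>
      (\<Sum>i\<in>I. b i - a i) < d \<longrightarrow> (\<Sum>i\<in>I. \<bar>f (b i) - f (a i)\<bar>) < e"
    using assms by blast
  have "nonoverlapping_intervals 0 1 {..<n} a b"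
    if "\<forall>i<n. 0 \<le> a i \<and> a i \<le> b i \<and> b i \<le> 1" "\<forall>i<n. \<forall>j<n. i \<noteq> j \<longrightarrow> b i \<le> a j \<or> b j \<le> a i"
    for n and a b :: "nat \<Rightarrow> real"
    using that unfolding nonoverlapping_intervals_def by auto
  then show "\<exists>d>0. \<forall>(n::nat) (a::nat \<Rightarrow> real) (b::nat \<Rightarrow> real).
      (\<forall>i<n. 0 \<le> a i \<and> a i \<le> b i \<and> b i \<le> 1) \<longrightarrow>
      (\<forall>i<n. \<forall>j<n. i \<noteq> j \<longrightarrow> b i \<le> a j \<or> b j \<le> a i) \<longrightarrow>
      (\<Sum>i<n. b i - a i) < d \<longrightarrow> (\<Sum>i<n. \<bar>f (b i) - f (a i)\<bar>) < e"
    using \<open>d > 0\<close> d by blast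
qed

lemma abs_cont_01_bounded_variation:
  fixes f :: "real \<Rightarrow> real"
  assumes "abs_cont_01 f"
  obtains B where "\<And>(I :: 'i set) a b. nonoverlapping_intervals 0 1 I a b \<Longrightarrow> (\<Sum>i\<in>I. \<bar>f (b i) - f (a i)\<bar>) \<le> B"
proof -
  obtain d where "d > 0" and d: "\<And>(I :: 'i set) a b. nonoverlapping_intervals 0 1 I a b \<Longrightarrow>
      (\<Sum>i\<in>I. b i - a i) < d \<Longrightarrow> (\<Sum>i\<in>I. \<bar>f (b i) - f (a i)\<bar>) < 1"
    using abs_cont_01E[OF assms zero_less_one] by blast
  define h where "h = d / 2"
  have h: "0 < h" "h < d" using \<open>d > 0\<close> unfolding h_def by auto
  \<comment> \<open>[0, min 1 (k h)] is cut into k pieces of length at most h, on each of which the sum is below 1\<close>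
  have bound: "(\<Sum>i\<in>I. \<bar>f (b i) - f (a i)\<bar>) \<le> real k"
    if "nonoverlapping_intervals 0 (min 1 (real k * h)) I a b" for k and I :: "'i set" and a b
    using that
  proof (induction k arbitrary: a b)
    case 0
    then have "a i = 0 \<and> b i = 0" if "i \<in> I" for i
      using that unfolding nonoverlapping_intervals_def by force
    then show ?case by simp
  next
    case (Suc k)
    define m where "m = min 1 (real k * h)"
    have m: "0 \<le> m" "m \<le> min 1 (real (Suc k) * h)" "min 1 (real (Suc k) * h) - m \<le> h"
      using h unfolding m_def by (auto simp: algebra_simps min_def)
    note split = nonoverlapping_intervals_split[OF Suc.prems m(1,2)]
    have "(\<Sum>i\<in>I. \<bar>f (min (b i) m) - f (min (a i) m)\<bar>) \<le> real k"
      using Suc.IH[OF split(1)[unfolded m_def]] unfolding m_def .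
    moreover have "(\<Sum>i\<in>I. \<bar>f (max (b i) m) - f (max (a i) m)\<bar>) < 1"
    proof (rule d)
      show "nonoverlapping_intervals 0 1 I (\<lambda>i. max (a i) m) (\<lambda>i. max (b i) m)"
        using nonoverlapping_intervals_mono[OF split(2)] m by simp
      show "(\<Sum>i\<in>I. max (b i) m - max (a i) m) < d"
        using sum_lengths_le[OF split(2)] m h by linarith
    qed
    ultimately show ?case
      using sum_abs_diff_split_le[of f b a I m] by simp
  qed
  obtain k :: nat where "1 / h < real k"
    using reals_Archimedean2 by blast
  then have "min 1 (real k * h) = 1"
    using h by (simp add: field_simps)
  then show ?thesis
    using that[of "real k"] bound[of k] by simp
qed

lemma abs_cont_01_imp_uniformly_continuous:
  fixes f :: "real \<Rightarrow> real"
  assumes "abs_cont_01 f" "e > 0"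
  obtains d where "d > 0" "\<And>x y. x \<in> {0..1} \<Longrightarrow> y \<in> {0..1} \<Longrightarrow> \<bar>y - x\<bar> < d \<Longrightarrow> \<bar>f y - f x\<bar> < e"
proof -
  obtain d where "d > 0" and d: "\<And>(I :: unit set) a b. nonoverlapping_intervals 0 1 I a b \<Longrightarrow>
      (\<Sum>i\<in>I. b i - a i) < d \<Longrightarrow> (\<Sum>i\<in>I. \<bar>f (b i) - f (a i)\<bar>) < e"
    using abs_cont_01E[OF assms] by blast
  have "\<bar>f y - f x\<bar> < e" if "x \<in> {0..1}" "y \<in> {0..1}" "x \<le> y" "y - x < d" for x y
    using d[of "{()}" "\<lambda>_. x" "\<lambda>_. y"] that by (simp add: nonoverlapping_intervals_def)
  then show ?thesis
    using that[OF \<open>d > 0\<close>] by (metis abs_minus_commute abs_of_nonneg abs_of_nonpos diff_ge_0_iff_ge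
        le_cases minus_diff_eq)
qed

lemma abs_cont_01_imp_continuous_on:
  assumes "abs_cont_01 f"
  shows "continuous_on {0..1} f"
  unfolding continuous_on_iff dist_real_def
  by (metis abs_cont_01_imp_uniformly_continuous[OF assms])

definition variation :: "(real \<Rightarrow> real) \<Rightarrow> real \<Rightarrow> real" where
  "variation f x = Sup {(\<Sum>i\<in>I. \<bar>f (b i) - f (a i)\<bar>) | I a b. nonoverlapping_intervals 0 x (I :: nat set) a b}"

lemma variation_upper:
  assumes "abs_cont_01 f" "x \<le> 1" "nonoverlapping_intervals 0 x (I :: nat set) a b"
  shows "(\<Sum>i\<in>I. \<bar>f (b i) - f (a i)\<bar>) \<le> variation f x"
proof -
  obtain B where "\<And>(I :: nat set) a b. nonoverlapping_intervals 0 1 I a b \<Longrightarrow> (\<Sum>i\<in>I. \<bar>f (b i) - f (a i)\<bar>) \<le> B"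
    using abs_cont_01_bounded_variation[OF assms(1)] by blast
  then have "bdd_above {(\<Sum>i\<in>I. \<bar>f (b i) - f (a i)\<bar>) | I a b. nonoverlapping_intervals 0 x (I :: nat set) a b}"
    using nonoverlapping_intervals_mono assms(2) by (intro bdd_aboveI[of _ B]) blast
  then show ?thesis
    unfolding variation_def by (rule cSup_upper[rotated]) (use assms in blast)
qed

lemma variation_least:
  assumes "\<And>(I :: nat set) a b. nonoverlapping_intervals 0 x I a b \<Longrightarrow> (\<Sum>i\<in>I. \<bar>f (b i) - f (a i)\<bar>) \<le> C"
  shows "variation f x \<le> C"
proof -
  have "nonoverlapping_intervals 0 x ({} :: nat set) a b" for a b
    unfolding nonoverlapping_intervals_def by simp
  then show ?thesis
    unfolding variation_def by (intro cSup_least) (use assms in blast)+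
qed

lemma variation_add_increment:
  assumes "abs_cont_01 f" "0 \<le> x" "x \<le> y" "y \<le> 1"
  shows "variation f x + \<bar>f y - f x\<bar> \<le> variation f y"
proof -
  have "(\<Sum>i\<in>I. \<bar>f (b i) - f (a i)\<bar>) \<le> variation f y - \<bar>f y - f x\<bar>"
    if I: "nonoverlapping_intervals 0 x (I :: nat set) a b" for I a b
  proof -
    have "finite I"
      using I unfolding nonoverlapping_intervals_def by blast
    then obtain k where k: "k \<notin> I"
      using ex_new_if_finite[OF infinite_UNIV_nat] by blast
    have "nonoverlapping_intervals 0 y (insert k I) (a(k := x)) (b(k := y))"
      using I k assms unfolding nonoverlapping_intervals_def by auto
    then have "(\<Sum>i\<in>insert k I. \<bar>f ((b(k := y)) i) - f ((a(k := x)) i)\<bar>) \<le> variation f y"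
      using variation_upper assms by blast
    moreover have "(\<Sum>i\<in>insert k I. \<bar>f ((b(k := y)) i) - f ((a(k := x)) i)\<bar>) =
        \<bar>f y - f x\<bar> + (\<Sum>i\<in>I. \<bar>f (b i) - f (a i)\<bar>)"
      using \<open>finite I\<close> k by (auto intro!: sum.cong)
    ultimately show ?thesis by simp
  qed
  then have "variation f x \<le> variation f y - \<bar>f y - f x\<bar>"
    by (rule variation_least)
  then show ?thesis by simp
qed

lemma variation_mono:
  assumes "abs_cont_01 f" "0 \<le> x" "x \<le> y" "y \<le> 1"
  shows "variation f x \<le> variation f y"
  using variation_add_increment[OF assms] by simp

lemma variation_increment_small:
  assumes "abs_cont_01 f" "e > 0"
  obtains d where "d > 0"
    "\<And>x y. 0 \<le> x \<Longrightarrow> x \<le> y \<Longrightarrow> y \<le> 1 \<Longrightarrow> y - x < d \<Longrightarrow> variation f y \<le> variation f x + e"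
proof -
  obtain d where "d > 0" and d: "\<And>(I :: nat set) a b. nonoverlapping_intervals 0 1 I a b \<Longrightarrow>
      (\<Sum>i\<in>I. b i - a i) < d \<Longrightarrow> (\<Sum>i\<in>I. \<bar>f (b i) - f (a i)\<bar>) < e"
    using abs_cont_01E[OF assms] by blast
  have "variation f y \<le> variation f x + e" if xy: "0 \<le> x" "x \<le> y" "y \<le> 1" "y - x < d" for x y
  proof (rule variation_least)
    fix I :: "nat set" and a b
    assume "nonoverlapping_intervals 0 y I a b"
    note split = nonoverlapping_intervals_split[OF this xy(1,2)]
    have "(\<Sum>i\<in>I. \<bar>f (min (b i) x) - f (min (a i) x)\<bar>) \<le> variation f x"
      using variation_upper[OF assms(1) _ split(1)] xy by simp
    moreover have "(\<Sum>i\<in>I. \<bar>f (max (b i) x) - f (max (a i) x)\<bar>) < e"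
    proof (rule d)
      show "nonoverlapping_intervals 0 1 I (\<lambda>i. max (a i) x) (\<lambda>i. max (b i) x)"
        using nonoverlapping_intervals_mono[OF split(2)] xy by simp
      show "(\<Sum>i\<in>I. max (b i) x - max (a i) x) < d"
        using sum_lengths_le[OF split(2)] xy by linarith
    qed
    ultimately show "(\<Sum>i\<in>I. \<bar>f (b i) - f (a i)\<bar>) \<le> variation f x + e"
      using sum_abs_diff_split_le[of f b a I x] by simp
  qed
  then show ?thesis
    using that[OF \<open>d > 0\<close>] by blast
qed

lemma continuous_on_variation:
  assumes "abs_cont_01 f"
  shows "continuous_on {0..1} (variation f)"
  unfolding continuous_on_iff dist_real_def
proof (intro ballI allI impI)
  fix x e :: real
  assume x: "x \<in> {0..1}" and "e > 0"
  then obtain d where "d > 0" and d: "\<And>x y. 0 \<le> x \<Longrightarrow> x \<le> y \<Longrightarrow> y \<le> 1 \<Longrightarrow> y - x < d \<Longrightarrow>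
      variation f y \<le> variation f x + e / 2"
    using variation_increment_small[OF assms, of "e / 2"] by auto
  have "\<bar>variation f y - variation f x\<bar> < e" if "y \<in> {0..1}" "\<bar>y - x\<bar> < d" for y
    using d[of x y] d[of y x] variation_mono[OF assms, of x y] variation_mono[OF assms, of y x]
      that x \<open>e > 0\<close> by (cases "x \<le> y") auto
  then show "\<exists>d>0. \<forall>y\<in>{0..1}. \<bar>y - x\<bar> < d \<longrightarrow> \<bar>variation f y - variation f x\<bar> < e"
    using \<open>d > 0\<close> by blast
qed

lemma abs_cont_01_diff_linear:
  fixes f :: "real \<Rightarrow> real"
  assumes "abs_cont_01 f"
  shows "abs_cont_01 (\<lambda>x. f x - x * c)"
proof (rule abs_cont_01I)
  fix e :: real
  assume "e > 0"
  then have "e / 2 > 0"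
    by simp
  then obtain d where "d > 0" and d: "\<And>(I :: nat set) a b. nonoverlapping_intervals 0 1 I a b \<Longrightarrow>
      (\<Sum>i\<in>I. b i - a i) < d \<Longrightarrow> (\<Sum>i\<in>I. \<bar>f (b i) - f (a i)\<bar>) < e / 2"
    using abs_cont_01E[OF assms] by blast
  define d' where "d' = min d (e / (2 * (\<bar>c\<bar> + 1)))"
  have c_bound: "\<bar>c\<bar> * (e / (2 * (\<bar>c\<bar> + 1))) \<le> e / 2"
    using \<open>e > 0\<close> by (simp add: field_simps)
  have "(\<Sum>i\<in>I. \<bar>(f (b i) - b i * c) - (f (a i) - a i * c)\<bar>) < e"
    if I: "nonoverlapping_intervals 0 1 I a b" and len: "(\<Sum>i\<in>I. b i - a i) < d'" for I :: "nat set" and a b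
  proof -
    have "\<bar>(f (b i) - b i * c) - (f (a i) - a i * c)\<bar> \<le> \<bar>f (b i) - f (a i)\<bar> + \<bar>c\<bar> * (b i - a i)" if "i \<in> I" for i
    proof -
      have "(f (b i) - b i * c) - (f (a i) - a i * c) = (f (b i) - f (a i)) - c * (b i - a i)"
        by (simp add: algebra_simps)
      moreover have "\<bar>c * (b i - a i)\<bar> = \<bar>c\<bar> * (b i - a i)"
        using I that unfolding nonoverlapping_intervals_def by (simp add: abs_mult)
      ultimately show ?thesis
        by (metis abs_triangle_ineq4)
    qed
    then have "(\<Sum>i\<in>I. \<bar>(f (b i) - b i * c) - (f (a i) - a i * c)\<bar>) \<le>
        (\<Sum>i\<in>I. \<bar>f (b i) - f (a i)\<bar> + \<bar>c\<bar> * (b i - a i))"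
      by (rule sum_mono)
    also have "\<dots> = (\<Sum>i\<in>I. \<bar>f (b i) - f (a i)\<bar>) + \<bar>c\<bar> * (\<Sum>i\<in>I. b i - a i)"
      by (simp add: sum.distrib sum_distrib_left)
    also have "\<dots> < e / 2 + \<bar>c\<bar> * (e / (2 * (\<bar>c\<bar> + 1)))"
      using d[OF I] len mult_left_mono[of "\<Sum>i\<in>I. b i - a i" "e / (2 * (\<bar>c\<bar> + 1))" "\<bar>c\<bar>"]
      unfolding d'_def by auto
    finally show ?thesis
      using c_bound by linarith
  qed
  moreover have "d' > 0"
    using \<open>d > 0\<close> \<open>e > 0\<close> unfolding d'_def by simp
  ultimately show "\<exists>d>0. \<forall>(I :: nat set) a b. nonoverlapping_intervals 0 1 I a b \<longrightarrow> (\<Sum>i\<in>I. b i - a i) < d \<longrightarrow>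
      (\<Sum>i\<in>I. \<bar>f (b i) - b i * c - (f (a i) - a i * c)\<bar>) < e"
    by blast
qed

section \<open>Lebesgue's differentiation theorem for monotone functions\<close>

text \<open>These say that the lower, resp. upper, derivate of \<open>G\<close> at \<open>x\<close>, taken over intervals
  straddling \<open>x\<close>, is below \<open>s\<close>, resp. above \<open>r\<close>.\<close>

definition slope_lt_near :: "(real \<Rightarrow> real) \<Rightarrow> real \<Rightarrow> real \<Rightarrow> bool" where
  "slope_lt_near G s x \<longleftrightarrow> (\<forall>d>0. \<exists>u v. u < x \<and> x < v \<and> v - u < d \<and> G v - G u < s * (v - u))"

definition slope_gt_near :: "(real \<Rightarrow> real) \<Rightarrow> real \<Rightarrow> real \<Rightarrow> bool" where
  "slope_gt_near G r x \<longleftrightarrow> (\<forall>d>0. \<exists>u v. u < x \<and> x < v \<and> v - u < d \<and> r * (v - u) < G v - G u)"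

lemma slope_lt_near_mono: "slope_lt_near G s x \<Longrightarrow> s \<le> s' \<Longrightarrow> slope_lt_near G s' x"
  unfolding slope_lt_near_def by (meson less_le_trans mult_right_mono diff_ge_0_iff_ge less_imp_le)

lemma slope_gt_near_antimono: "slope_gt_near G r x \<Longrightarrow> r' \<le> r \<Longrightarrow> slope_gt_near G r' x"
  unfolding slope_gt_near_def by (meson le_less_trans mult_right_mono diff_ge_0_iff_ge less_imp_le)

lemma mono_slope_gt_near_neg:
  assumes "mono G" "r < 0"
  shows "slope_gt_near G r x"
  unfolding slope_gt_near_def
proof (intro allI impI)
  fix d :: real
  assume "d > 0"
  then have "x - d/4 < x" "x < x + d/4" "(x + d/4) - (x - d/4) < d" "r * ((x + d/4) - (x - d/4)) < 0"
    using assms(2) by (simp_all add: mult_neg_pos)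
  moreover have "G (x - d/4) \<le> G (x + d/4)"
    using monoD[OF assms(1)] \<open>d > 0\<close> by simp
  ultimately show "\<exists>u v. u < x \<and> x < v \<and> v - u < d \<and> r * (v - u) < G v - G u"
    by (intro exI[of _ "x - d/4"] exI[of _ "x + d/4"]) linarith
qed

lemma mono_not_slope_lt_near_nonpos:
  assumes "mono G" "s \<le> 0"
  shows "\<not> slope_lt_near G s x"
proof
  assume "slope_lt_near G s x"
  then obtain u v where "u < v" "G v - G u < s * (v - u)"
    unfolding slope_lt_near_def by (meson less_trans zero_less_one)
  moreover have "G u \<le> G v"
    using monoD[OF assms(1)] \<open>u < v\<close> by simp
  ultimately show False
    using assms(2) by (smt (verit) mult_nonpos_nonneg)
qed

lemma isCont_nonpos_if_eventually_nonpos: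
  fixes g :: "real \<Rightarrow> real"
  assumes "isCont g x" "eventually (\<lambda>u. g u \<le> 0) F" "F \<le> at x" "F \<noteq> bot"
  shows "g x \<le> 0"
  using tendsto_mono[OF assms(3) assms(1)[unfolded isCont_def]] assms(2,4) by (rule tendsto_upperbound)

lemma has_real_derivative_from_straddling_intervals:
  fixes G :: "real \<Rightarrow> real"
  assumes cont: "isCont G x"
    and straddle: "\<And>e. e > 0 \<Longrightarrow> \<exists>d>0. \<forall>u v. u < x \<longrightarrow> x < v \<longrightarrow> v - u < d \<longrightarrow>
      \<bar>G v - G u - L * (v - u)\<bar> \<le> e * (v - u)"
  shows "(G has_real_derivative L) (at x)"
proof -
  have "\<exists>d>0. \<forall>y. \<bar>y - x\<bar> < d \<longrightarrow> \<bar>G y - G x - L * (y - x)\<bar> \<le> e * \<bar>y - x\<bar>" if e: "e > 0" for e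
  proof -
    obtain d where "d > 0" and d: "\<And>u v. u < x \<Longrightarrow> x < v \<Longrightarrow> v - u < d \<Longrightarrow>
        \<bar>G v - G u - L * (v - u)\<bar> \<le> e * (v - u)"
      using straddle[OF e] by blast
    \<comment> \<open>let the end point on the other side of x tend to x\<close>
    have "\<bar>G y - G x - L * (y - x)\<bar> \<le> e * \<bar>y - x\<bar>" if y: "\<bar>y - x\<bar> < d / 2" for y
    proof (cases rule: linorder_cases[of y x])
      case less
      have "eventually (\<lambda>v. v \<in> {x<..<x + d / 2}) (at_right x)"
        using \<open>d > 0\<close> by (intro eventually_at_right_real) auto
      then have "eventually (\<lambda>v. \<bar>G v - G y - L * (v - y)\<bar> - e * (v - y) \<le> 0) (at_right x)"
        by (rule eventually_mono) (use d[of y] less y in auto)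
      then have "\<bar>G x - G y - L * (x - y)\<bar> - e * (x - y) \<le> 0"
        by (rule isCont_nonpos_if_eventually_nonpos[rotated]) (auto intro!: continuous_intros cont at_le)
      then show ?thesis
        using less by (simp add: abs_minus_commute algebra_simps)
    next
      case greater
      have "eventually (\<lambda>u. u \<in> {x - d / 2<..<x}) (at_left x)"
        using \<open>d > 0\<close> by (intro eventually_at_left_real) auto
      then have "eventually (\<lambda>u. \<bar>G y - G u - L * (y - u)\<bar> - e * (y - u) \<le> 0) (at_left x)"
        by (rule eventually_mono) (use d[of _ y] greater y in auto)
      then have "\<bar>G y - G x - L * (y - x)\<bar> - e * (y - x) \<le> 0"
        by (rule isCont_nonpos_if_eventually_nonpos[rotated]) (auto intro!: continuous_intros cont at_le)
      then show ?thesis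
        using greater by simp
    qed simp
    then show ?thesis
      using \<open>d > 0\<close> by (intro exI[of _ "d / 2"]) auto
  qed
  then show ?thesis
    unfolding has_field_derivative_def has_derivative_at_alt
    by (simp add: bounded_linear_mult_right)
qed

lemma has_real_derivative_if_not_slope_near:
  fixes G :: "real \<Rightarrow> real"
  assumes "isCont G x" and not_gt: "\<And>e. e > 0 \<Longrightarrow> \<not> slope_gt_near G (L + e) x"
    and not_lt: "\<And>e. e > 0 \<Longrightarrow> \<not> slope_lt_near G (L - e) x"
  shows "(G has_real_derivative L) (at x)"
proof (rule has_real_derivative_from_straddling_intervals[OF assms(1)])
  fix e :: real
  assume "e > 0"
  obtain d1 where "d1 > 0" and d1: "\<forall>u v. u < x \<longrightarrow> x < v \<longrightarrow> v - u < d1 \<longrightarrow> G v - G u \<le> (L + e) * (v - u)"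
    using not_gt[OF \<open>e > 0\<close>] unfolding slope_gt_near_def by (meson not_less)
  obtain d2 where "d2 > 0" and d2: "\<forall>u v. u < x \<longrightarrow> x < v \<longrightarrow> v - u < d2 \<longrightarrow> (L - e) * (v - u) \<le> G v - G u"
    using not_lt[OF \<open>e > 0\<close>] unfolding slope_lt_near_def by (meson not_less)
  have "\<bar>G v - G u - L * (v - u)\<bar> \<le> e * (v - u)" if "u < x" "x < v" "v - u < min d1 d2" for u v
  proof -
    have "G v - G u \<le> (L + e) * (v - u)" "(L - e) * (v - u) \<le> G v - G u"
      using d1 d2 that by auto
    then show ?thesis
      by (simp add: algebra_simps abs_le_iff)
  qed
  then show "\<exists>d>0. \<forall>u v. u < x \<longrightarrow> x < v \<longrightarrow> v - u < d \<longrightarrow> \<bar>G v - G u - L * (v - u)\<bar> \<le> e * (v - u)"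
    using \<open>d1 > 0\<close> \<open>d2 > 0\<close> by (intro exI[of _ "min d1 d2"]) auto
qed

lemma mono_nondifferentiable_cases:
  fixes G :: "real \<Rightarrow> real"
  assumes "mono G" "isCont G x" "\<not> G differentiable at x"
  shows "(\<exists>s\<in>\<rat>. \<exists>r\<in>\<rat>. s < r \<and> slope_lt_near G s x \<and> slope_gt_near G r x) \<or>
    (\<forall>M::nat. slope_gt_near G (real M) x)"
proof (rule ccontr)
  assume "\<not> ?thesis"
  then obtain M :: nat where M: "\<not> slope_gt_near G (real M) x"
    and no_gap: "\<And>s r. s \<in> \<rat> \<Longrightarrow> r \<in> \<rat> \<Longrightarrow> s < r \<Longrightarrow> slope_lt_near G s x \<Longrightarrow> slope_gt_near G r x \<Longrightarrow> False"
    by blast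
  \<comment> \<open>otherwise the supremum of the slopes exceeded near x is the derivative\<close>
  define H where "H = {r. slope_gt_near G r x}"
  have "H \<noteq> {}"
    using mono_slope_gt_near_neg[OF assms(1), of "-1"] unfolding H_def by auto
  have "bdd_above H"
  proof (rule bdd_aboveI[of _ "real M"])
    fix r assume "r \<in> H"
    then show "r \<le> real M"
      using M slope_gt_near_antimono unfolding H_def by (metis mem_Collect_eq nle_le)
  qed
  have "(G has_real_derivative Sup H) (at x)"
  proof (rule has_real_derivative_if_not_slope_near[OF assms(2)])
    show "\<not> slope_gt_near G (Sup H + e) x" if "e > 0" for e
      using cSup_upper[OF _ \<open>bdd_above H\<close>, of "Sup H + e"] that unfolding H_def by auto
    show "\<not> slope_lt_near G (Sup H - e) x" if "e > 0" for e
    proof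
      assume low: "slope_lt_near G (Sup H - e) x"
      obtain s where s: "s \<in> \<rat>" "Sup H - e < s" "s < Sup H"
        using Rats_dense_in_real[of "Sup H - e" "Sup H"] \<open>e > 0\<close> by auto
      obtain r where r: "r \<in> \<rat>" "s < r" "r < Sup H"
        using Rats_dense_in_real[of s "Sup H"] s by auto
      obtain h where "h \<in> H" "r < h"
        using r(3) less_cSup_iff[OF \<open>H \<noteq> {}\<close> \<open>bdd_above H\<close>] by blast
      then have "slope_gt_near G r x"
        using slope_gt_near_antimono unfolding H_def by fastforce
      moreover have "slope_lt_near G s x"
        using slope_lt_near_mono[OF low] s by simp
      ultimately show False
        using no_gap s r by blast
    qed
  qed
  then show False
    using assms(3) real_differentiable_def by blast
qed

lemma sets_lebesgue_straddled_points:
  fixes Q :: "real \<Rightarrow> real \<Rightarrow> bool"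
  shows "{x. \<forall>d>0. \<exists>u v. u < x \<and> x < v \<and> v - u < d \<and> Q u v} \<in> sets lebesgue"
proof -
  define W where "W n = {x. \<exists>u v. u < x \<and> x < v \<and> v - u < 1 / real (Suc n) \<and> Q u v}" for n :: nat
  have "W n = (\<Union>p\<in>{p. snd p - fst p < 1 / real (Suc n) \<and> Q (fst p) (snd p)}. {fst p<..<snd p})" for n
    unfolding W_def by force
  then have "open (W n)" for n
    by auto
  then have "(\<Inter>n. W n) \<in> sets lebesgue"
    by (intro sets.countable_INT) auto
  moreover have "{x. \<forall>d>0. \<exists>u v. u < x \<and> x < v \<and> v - u < d \<and> Q u v} = (\<Inter>n. W n)"
  proof (intro equalityI subsetI)
    fix x
    assume x: "x \<in> (\<Inter>n. W n)"
    have "\<exists>u v. u < x \<and> x < v \<and> v - u < d \<and> Q u v" if "d > 0" for d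
    proof -
      obtain n where "1 / real (Suc n) < d"
        using nat_approx_posE \<open>d > 0\<close> by blast
      moreover have "x \<in> W n" using x by blast
      ultimately show ?thesis
        unfolding W_def by force
    qed
    then show "x \<in> {x. \<forall>d>0. \<exists>u v. u < x \<and> x < v \<and> v - u < d \<and> Q u v}"
      by blast
  qed (simp add: W_def)
  ultimately show ?thesis
    by simp
qed

lemma sets_lebesgue_slope_lt_near: "{x. slope_lt_near G s x} \<in> sets lebesgue"
  unfolding slope_lt_near_def by (rule sets_lebesgue_straddled_points)

lemma sets_lebesgue_slope_gt_near: "{x. slope_gt_near G r x} \<in> sets lebesgue"
  unfolding slope_gt_near_def by (rule sets_lebesgue_straddled_points)

lemma Vitali_covering_intervals:
  fixes S U :: "real set" and P :: "real \<Rightarrow> real \<Rightarrow> bool"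
  assumes "open U" "S \<subseteq> U"
    and P: "\<And>x d. x \<in> S \<Longrightarrow> d > 0 \<Longrightarrow> \<exists>u v. u < x \<and> x < v \<and> v - u < d \<and> P u v"
  obtains C where "countable C" "\<And>i. i \<in> C \<Longrightarrow> fst i < snd i \<and> {fst i..snd i} \<subseteq> U \<and> P (fst i) (snd i)"
    "disjoint_family_on (\<lambda>i. {fst i..snd i}) C" "negligible (S - (\<Union>i\<in>C. {fst i..snd i}))"
proof -
  define K where "K = {i. fst i < snd i \<and> {fst i..snd i} \<subseteq> U \<and> P (fst i) (snd i)}"
  define mid where "mid i = (fst i + snd i) / 2" for i :: "real \<times> real"
  define rad where "rad i = (snd i - fst i) / 2" for i :: "real \<times> real"
  have cball: "cball (mid i) (rad i) = {fst i..snd i}" for i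
    unfolding mid_def rad_def cball_eq_atLeastAtMost by (simp add: field_simps)
  have cover: "\<exists>i. i \<in> K \<and> x \<in> cball (mid i) (rad i) \<and> rad i < d" if x: "x \<in> S" and "0 < d" for x d
  proof -
    obtain e where "e > 0" "ball x e \<subseteq> U"
      using assms x open_contains_ball by blast
    moreover obtain u v where "u < x" "x < v" "v - u < min d e" "P u v"
      using P[OF x, of "min d e"] \<open>0 < d\<close> \<open>e > 0\<close> by auto
    moreover have "{u..v} \<subseteq> ball x e"
      using calculation by (auto simp: dist_real_def)
    ultimately have "(u, v) \<in> K" "x \<in> cball (mid (u, v)) (rad (u, v))" "rad (u, v) < d"
      unfolding K_def cball by (auto simp: rad_def)
    then show ?thesis
      by blast
  qed
  have "\<And>i. i \<in> K \<Longrightarrow> 0 < rad i"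
    unfolding K_def rad_def by auto
  then obtain C where C: "countable C" "C \<subseteq> K"
     "pairwise (\<lambda>i j. disjnt (cball (mid i) (rad i)) (cball (mid j) (rad j))) C"
     "negligible (S - (\<Union>i \<in> C. cball (mid i) (rad i)))"
    using Vitali_covering_theorem_cballs[of K rad S mid, OF _ cover] by blast
  show ?thesis
  proof (rule that[OF C(1)])
    show "\<And>i. i \<in> C \<Longrightarrow> fst i < snd i \<and> {fst i..snd i} \<subseteq> U \<and> P (fst i) (snd i)"
      using C(2) unfolding K_def by auto
    show "disjoint_family_on (\<lambda>i. {fst i..snd i}) C"
      using C(3) unfolding cball disjoint_family_on_def pairwise_def disjnt_def by auto
    show "negligible (S - (\<Union>i\<in>C. {fst i..snd i}))"
      using C(4) unfolding cball .
  qed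
qed

lemma emeasure_lebesgue_disjoint_Icc_Union:
  assumes "countable C" "\<And>i. i \<in> C \<Longrightarrow> fst i < snd i" "disjoint_family_on (\<lambda>i. {fst i..snd i}) C"
  shows "emeasure lebesgue (\<Union>i\<in>C. {fst i..snd i}) = (\<integral>\<^sup>+i. ennreal (snd i - fst i) \<partial>count_space C)"
proof -
  have "emeasure lebesgue (\<Union>i\<in>C. {fst i..snd i}) = (\<integral>\<^sup>+i. emeasure lebesgue {fst i..snd i} \<partial>count_space C)"
    by (rule emeasure_UN_countable) (use assms in auto)
  also have "\<dots> = (\<integral>\<^sup>+i. ennreal (snd i - fst i) \<partial>count_space C)"
    using assms(2) by (intro nn_integral_cong) (auto simp: less_imp_le)
  finally show ?thesis .
qed

lemma emeasure_interval_measure_disjoint_Ioc_Union: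
  fixes G :: "real \<Rightarrow> real"
  assumes "mono G" "continuous_on UNIV G"
    and "countable C" "\<And>i. i \<in> C \<Longrightarrow> fst i < snd i" "disjoint_family_on (\<lambda>i. {fst i..snd i}) C"
  shows "emeasure (interval_measure G) (\<Union>i\<in>C. {fst i<..snd i}) =
    (\<integral>\<^sup>+i. ennreal (G (snd i) - G (fst i)) \<partial>count_space C)"
proof -
  have "continuous (at_right x) G" for x
    using assms(2) by (meson UNIV_I continuous_on_eq_continuous_within continuous_within_subset subset_UNIV)
  moreover have disj: "disjoint_family_on (\<lambda>i. {fst i<..snd i}) C"
    using assms(5) greaterThanAtMost_subseteq_atLeastAtMost_iff[of "fst i" "snd i" "fst i" "snd i" for i]
    unfolding disjoint_family_on_def by blast
  moreover have "emeasure (interval_measure G) (\<Union>i\<in>C. {fst i<..snd i}) =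
      (\<integral>\<^sup>+i. emeasure (interval_measure G) {fst i<..snd i} \<partial>count_space C)"
    by (rule emeasure_UN_countable) (use assms disj in auto)
  ultimately show ?thesis
    using assms(1,4) by (auto intro!: nn_integral_cong simp: less_imp_le emeasure_interval_measure_Ioc monoD)
qed

lemma emeasure_le_if_negligible_diff:
  assumes "S \<in> sets lebesgue" "T \<in> sets lebesgue" "negligible (S - T)"
  shows "emeasure lebesgue S \<le> emeasure lebesgue T"
proof -
  have "emeasure lebesgue S \<le> emeasure lebesgue (T \<union> (S - T))"
    by (rule emeasure_mono) (use assms in auto)
  also have "\<dots> = emeasure lebesgue T"
    by (rule emeasure_Un_null_set) (use assms in \<open>auto simp: negligible_iff_null_sets\<close>)
  finally show ?thesis .
qed

lemma emeasure_lebesgue_subset_Icc_finite: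
  assumes "E \<subseteq> {a..b::real}"
  obtains m where "emeasure lebesgue E = ennreal m" "0 \<le> m"
proof -
  have "emeasure lebesgue E \<le> emeasure lebesgue {a..b}"
    using assms by (intro emeasure_mono) auto
  then have "emeasure lebesgue E < \<infinity>"
    by (simp add: emeasure_lborel_Icc_eq le_less_trans)
  then show ?thesis
    using that by (metis ennreal_cases less_irrefl infinity_ennreal_def)
qed

lemma slope_lt_near_cover:
  fixes G :: "real \<Rightarrow> real"
  assumes G: "mono G" "continuous_on UNIV G" and "open U" "S \<subseteq> U" "0 \<le> s"
    and slope: "\<And>x. x \<in> S \<Longrightarrow> slope_lt_near G s x"
  obtains V where "open V" "negligible (S - V)"
    "emeasure (interval_measure G) V \<le> ennreal s * emeasure lebesgue U"
proof -
  have "\<exists>u v. u < x \<and> x < v \<and> v - u < d \<and> G v - G u < s * (v - u)" if "x \<in> S" "d > 0" for x d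
    using slope that unfolding slope_lt_near_def by blast
  then obtain C where C: "countable C"
    "\<And>i. i \<in> C \<Longrightarrow> fst i < snd i \<and> {fst i..snd i} \<subseteq> U \<and> G (snd i) - G (fst i) < s * (snd i - fst i)"
    "disjoint_family_on (\<lambda>i. {fst i..snd i}) C" "negligible (S - (\<Union>i\<in>C. {fst i..snd i}))"
    using Vitali_covering_intervals[OF assms(3,4), of "\<lambda>u v. G v - G u < s * (v - u)"] by blast
  have lt: "\<And>i. i \<in> C \<Longrightarrow> fst i < snd i"
    using C(2) by blast
  \<comment> \<open>open interiors, so that a second Vitali cover fits inside; the end points are countable\<close>
  define V where "V = (\<Union>i\<in>C. {fst i<..<snd i})"
  have "S - V \<subseteq> (S - (\<Union>i\<in>C. {fst i..snd i})) \<union> (fst ` C \<union> snd ` C)"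
    unfolding V_def by force
  moreover have "negligible (fst ` C \<union> snd ` C)"
    using C(1) by (simp add: negligible_iff_null_sets null_sets_completionI countable_imp_null_set_lborel)
  ultimately have "negligible (S - V)"
    using C(4) negligible_Un negligible_subset by metis
  have "emeasure (interval_measure G) V \<le> emeasure (interval_measure G) (\<Union>i\<in>C. {fst i<..snd i})"
    unfolding V_def using C(1) by (intro emeasure_mono) (auto intro!: sets.countable_UN'')
  also have "\<dots> = (\<integral>\<^sup>+i. ennreal (G (snd i) - G (fst i)) \<partial>count_space C)"
    by (rule emeasure_interval_measure_disjoint_Ioc_Union[OF G C(1) lt C(3)])
  also have "\<dots> \<le> (\<integral>\<^sup>+i. ennreal s * ennreal (snd i - fst i) \<partial>count_space C)"
  proof (intro nn_integral_mono)
    fix i assume "i \<in> space (count_space C)"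
    then show "ennreal (G (snd i) - G (fst i)) \<le> ennreal s * ennreal (snd i - fst i)"
      using C(2)[of i] \<open>0 \<le> s\<close> by (simp add: ennreal_mult[symmetric] ennreal_leI)
  qed
  also have "\<dots> = ennreal s * emeasure lebesgue (\<Union>i\<in>C. {fst i..snd i})"
    by (simp add: nn_integral_cmult emeasure_lebesgue_disjoint_Icc_Union[OF C(1) lt C(3)])
  also have "\<dots> \<le> ennreal s * emeasure lebesgue U"
    using C(2) by (intro mult_left_mono emeasure_mono) (auto simp: \<open>open U\<close>)
  finally have "emeasure (interval_measure G) V \<le> ennreal s * emeasure lebesgue U" .
  moreover have "open V"
    unfolding V_def by (intro open_UN) auto
  ultimately show ?thesis
    using that \<open>negligible (S - V)\<close> by blast
qed

lemma slope_gt_near_cover: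
  fixes G :: "real \<Rightarrow> real"
  assumes G: "mono G" "continuous_on UNIV G" and "open V" "negligible (S - V)" "S \<in> sets lebesgue"
    and "0 \<le> r" and slope: "\<And>x. x \<in> S \<Longrightarrow> slope_gt_near G r x"
  shows "ennreal r * emeasure lebesgue S \<le> emeasure (interval_measure G) V"
proof -
  have "\<exists>u v. u < x \<and> x < v \<and> v - u < d \<and> r * (v - u) < G v - G u" if "x \<in> S \<inter> V" "d > 0" for x d
    using slope that unfolding slope_gt_near_def by blast
  then obtain C where C: "countable C"
    "\<And>i. i \<in> C \<Longrightarrow> fst i < snd i \<and> {fst i..snd i} \<subseteq> V \<and> r * (snd i - fst i) < G (snd i) - G (fst i)"
    "disjoint_family_on (\<lambda>i. {fst i..snd i}) C" "negligible (S \<inter> V - (\<Union>i\<in>C. {fst i..snd i}))"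
    using Vitali_covering_intervals[OF assms(3) inf_le2, of S "\<lambda>u v. r * (v - u) < G v - G u"] by blast
  have lt: "\<And>i. i \<in> C \<Longrightarrow> fst i < snd i"
    using C(2) by blast
  define T where "T = (\<Union>i\<in>C. {fst i..snd i})"
  have "T \<in> sets lebesgue"
    unfolding T_def using C(1) by (intro sets.countable_UN'') auto
  moreover have "negligible (S - T)"
    using negligible_Un[OF assms(4) C(4)] unfolding T_def by (rule negligible_subset) blast
  ultimately have "ennreal r * emeasure lebesgue S \<le> ennreal r * emeasure lebesgue T"
    using assms(5) by (intro mult_left_mono emeasure_le_if_negligible_diff) auto
  also have "\<dots> = (\<integral>\<^sup>+i. ennreal r * ennreal (snd i - fst i) \<partial>count_space C)"
    by (simp add: T_def nn_integral_cmult emeasure_lebesgue_disjoint_Icc_Union[OF C(1) lt C(3)])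
  also have "\<dots> \<le> (\<integral>\<^sup>+i. ennreal (G (snd i) - G (fst i)) \<partial>count_space C)"
  proof (intro nn_integral_mono)
    fix i assume "i \<in> space (count_space C)"
    then show "ennreal r * ennreal (snd i - fst i) \<le> ennreal (G (snd i) - G (fst i))"
      using C(2)[of i] \<open>0 \<le> r\<close> by (simp add: ennreal_mult[symmetric] ennreal_leI)
  qed
  also have "\<dots> = emeasure (interval_measure G) (\<Union>i\<in>C. {fst i<..snd i})"
    by (rule emeasure_interval_measure_disjoint_Ioc_Union[OF G C(1) lt C(3), symmetric])
  also have "\<dots> \<le> emeasure (interval_measure G) V"
    using C(2) \<open>open V\<close> by (intro emeasure_mono) fastforce+
  finally show ?thesis .
qed

lemma mono_negligible_slope_gap:
  fixes G :: "real \<Rightarrow> real"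
  assumes G: "mono G" "continuous_on UNIV G" and "s < r"
  shows "negligible {x \<in> {a<..<b}. slope_lt_near G s x \<and> slope_gt_near G r x}" (is "negligible ?E")
proof (cases "s \<le> 0")
  case True
  then show ?thesis
    using mono_not_slope_lt_near_nonpos[OF G(1)] by simp
next
  case False
  have "?E = {a<..<b} \<inter> {x. slope_lt_near G s x} \<inter> {x. slope_gt_near G r x}"
    by auto
  then have E: "?E \<in> sets lebesgue"
    by (metis sets.Int sets_lebesgue_slope_lt_near sets_lebesgue_slope_gt_near
        greaterThanLessThan_borel sets_completionI_sets sets_lborel)
  have "?E \<subseteq> {a..b}"
    by auto
  then obtain m where m: "emeasure lebesgue ?E = ennreal m" "0 \<le> m"
    by (rule emeasure_lebesgue_subset_Icc_finite)
  \<comment> \<open>near \<open>E\<close>, \<open>G\<close> grows at least with slope \<open>r\<close> and at most with slope \<open>s\<close>\<close>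
  have key: "r * m \<le> s * (m + e)" if "e > 0" for e
  proof -
    obtain U where U: "open U" "?E \<subseteq> U" "U - ?E \<in> lmeasurable" "emeasure lebesgue (U - ?E) < ennreal e"
      using sets_lebesgue_outer_open[OF E \<open>e > 0\<close>] by blast
    obtain V where V: "open V" "negligible (?E - V)"
      "emeasure (interval_measure G) V \<le> ennreal s * emeasure lebesgue U"
      using slope_lt_near_cover[OF G U(1,2), of s] False by auto
    have "emeasure lebesgue U = emeasure lebesgue (?E \<union> (U - ?E))"
      using U(2) by (simp add: Un_absorb1)
    also have "\<dots> \<le> emeasure lebesgue ?E + emeasure lebesgue (U - ?E)"
      using E U(3) by (intro emeasure_subadditive) auto
    also have "\<dots> \<le> ennreal (m + e)"
      using m U(4) \<open>e > 0\<close> by (simp add: less_imp_le)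
    finally have U_le: "emeasure lebesgue U \<le> ennreal (m + e)" .
    have "ennreal (r * m) = ennreal r * emeasure lebesgue ?E"
      using m \<open>s < r\<close> False by (simp add: ennreal_mult)
    also have "\<dots> \<le> emeasure (interval_measure G) V"
      using slope_gt_near_cover[OF G V(1,2) E, of r] \<open>s < r\<close> False by auto
    also have "\<dots> \<le> ennreal s * ennreal (m + e)"
      using V(3) U_le by (meson mult_left_mono order_trans zero_le)
    also have "\<dots> = ennreal (s * (m + e))"
      using m(2) \<open>e > 0\<close> False by (simp add: ennreal_mult)
    finally show ?thesis
      using m(2) \<open>e > 0\<close> False by simp
  qed
  have "(r - s) * m \<le> 0"
  proof (rule field_le_epsilon)
    fix e :: real
    assume "e > 0"
    then show "(r - s) * m \<le> 0 + e"
      using key[of "e / s"] False by (simp add: algebra_simps)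
  qed
  then have "m = 0"
    using \<open>s < r\<close> m(2) by (simp add: mult_le_0_iff)
  then show ?thesis
    using m(1) E by (simp add: negligible_iff_emeasure0)
qed

lemma mono_negligible_infinite_slope:
  fixes G :: "real \<Rightarrow> real"
  assumes G: "mono G" "continuous_on UNIV G"
  shows "negligible {x \<in> {a<..<b}. \<forall>M::nat. slope_gt_near G (real M) x}" (is "negligible ?E")
proof (cases "a < b")
  case False
  then show ?thesis by simp
next
  case True
  have "(\<Inter>M. {x. slope_gt_near G (real M) x}) \<in> sets lebesgue"
    by (intro sets.countable_INT) (auto simp: sets_lebesgue_slope_gt_near)
  moreover have "{a<..<b} \<in> sets lebesgue"
    by simp
  moreover have "?E = {a<..<b} \<inter> (\<Inter>M. {x. slope_gt_near G (real M) x})"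
    by auto
  ultimately have E: "?E \<in> sets lebesgue"
    by (metis sets.Int)
  have "?E \<subseteq> {a..b}"
    by auto
  then obtain m where m: "emeasure lebesgue ?E = ennreal m" "0 \<le> m"
    by (rule emeasure_lebesgue_subset_Icc_finite)
  have "continuous (at_right x) G" for x
    using G(2) by (meson UNIV_I continuous_on_eq_continuous_within continuous_within_subset subset_UNIV)
  then have Ioc: "emeasure (interval_measure G) {a<..b} = ennreal (G b - G a)"
    using True G(1) by (simp add: emeasure_interval_measure_Ioc monoD)
  have E_sub: "?E - {a<..<b} = {}"
    by auto
  have "real M * m \<le> G b - G a" for M :: nat
  proof -
    have "ennreal (real M * m) = ennreal (real M) * emeasure lebesgue ?E"
      using m by (simp add: ennreal_mult)
    also have "\<dots> \<le> emeasure (interval_measure G) {a<..<b}"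
      using slope_gt_near_cover[OF G open_greaterThanLessThan[of a b] _ E, where r = "real M"] E_sub by simp
    also have "\<dots> \<le> ennreal (G b - G a)"
      unfolding Ioc[symmetric] by (rule emeasure_mono) auto
    finally show ?thesis
      using True G(1) by (simp add: monoD)
  qed
  then have "m = 0"
    using m(2) by (metis reals_Archimedean3 not_le less_le)
  then show ?thesis
    using m(1) E by (simp add: negligible_iff_emeasure0)
qed

lemma mono_differentiable_ae:
  fixes G :: "real \<Rightarrow> real"
  assumes G: "mono G" "continuous_on UNIV G"
  shows "negligible {x \<in> {a<..<b}. \<not> G differentiable at x}"
proof -
  define gap where "gap p = {x \<in> {a<..<b}. slope_lt_near G (fst p) x \<and> slope_gt_near G (snd p) x}" for p
  have "countable {p \<in> \<rat> \<times> \<rat>. fst p < snd p}"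
    by (rule countable_subset[of _ "\<rat> \<times> \<rat>"]) (auto simp: countable_rat)
  then have "negligible (\<Union>(gap ` {p \<in> \<rat> \<times> \<rat>. fst p < snd p}))"
    unfolding gap_def using mono_negligible_slope_gap[OF G] by (intro negligible_countable_Union) auto
  moreover have "negligible {x \<in> {a<..<b}. \<forall>M::nat. slope_gt_near G (real M) x}"
    by (rule mono_negligible_infinite_slope[OF G])
  moreover have "{x \<in> {a<..<b}. \<not> G differentiable at x} \<subseteq>
      \<Union>(gap ` {p \<in> \<rat> \<times> \<rat>. fst p < snd p}) \<union> {x \<in> {a<..<b}. \<forall>M::nat. slope_gt_near G (real M) x}"
  proof
    fix x
    assume x: "x \<in> {x \<in> {a<..<b}. \<not> G differentiable at x}"
    moreover have "isCont G x"
      using G(2) by (simp add: continuous_on_eq_continuous_within)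
    ultimately consider s r where "s \<in> \<rat>" "r \<in> \<rat>" "s < r" "slope_lt_near G s x" "slope_gt_near G r x"
      | "\<forall>M::nat. slope_gt_near G (real M) x"
      using mono_nondifferentiable_cases[OF G(1)] by blast
    then show "x \<in> \<Union>(gap ` {p \<in> \<rat> \<times> \<rat>. fst p < snd p}) \<union> {x \<in> {a<..<b}. \<forall>M::nat. slope_gt_near G (real M) x}"
    proof cases
      case 1
      then have "(s, r) \<in> {p \<in> \<rat> \<times> \<rat>. fst p < snd p}" "x \<in> gap (s, r)"
        using x unfolding gap_def by auto
      then show ?thesis by blast
    qed (use x in auto)
  qed
  ultimately show ?thesis
    by (meson negligible_Un negligible_subset)
qed

lemma abs_cont_01_monotone_decomposition:
  assumes "abs_cont_01 f"
  obtains G1 G2 :: "real \<Rightarrow> real" where "mono G1" "mono G2" "continuous_on UNIV G1" "continuous_on UNIV G2"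
    "\<And>x. x \<in> {0..1} \<Longrightarrow> f x = G1 x - G2 x"
proof -
  define clamp :: "real \<Rightarrow> real" where "clamp x = max 0 (min 1 x)" for x
  have clamp: "clamp x \<in> {0..1}" "x \<le> y \<Longrightarrow> clamp x \<le> clamp y" "continuous_on UNIV clamp"
    "x \<in> {0..1} \<Longrightarrow> clamp x = x" for x y
    unfolding clamp_def by (auto, intro continuous_intros)
  define G1 where "G1 x = variation f (clamp x)" for x
  define G2 where "G2 x = variation f (clamp x) - f (clamp x)" for x
  have "mono G1"
    unfolding G1_def using clamp variation_mono[OF assms] by (intro monoI) auto
  moreover have "mono G2"
  proof (rule monoI)
    fix x y :: real
    assume "x \<le> y"
    then show "G2 x \<le> G2 y"
      using variation_add_increment[OF assms, of "clamp x" "clamp y"] clamp unfolding G2_def by auto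
  qed
  moreover have "clamp ` UNIV \<subseteq> {0..1}"
    using clamp(1) by blast
  then have "continuous_on UNIV (\<lambda>x. variation f (clamp x))" "continuous_on UNIV (\<lambda>x. f (clamp x))"
    using continuous_on_compose2[OF continuous_on_variation[OF assms] clamp(3)]
      continuous_on_compose2[OF abs_cont_01_imp_continuous_on[OF assms] clamp(3)] by auto
  then have "continuous_on UNIV G1" "continuous_on UNIV G2"
    unfolding G1_def G2_def by (auto intro: continuous_on_diff)
  moreover have "f x = G1 x - G2 x" if "x \<in> {0..1}" for x
    using clamp(4)[OF that] unfolding G1_def G2_def by simp
  ultimately show ?thesis
    using that by blast
qed

lemma abs_cont_01_differentiable_ae:
  assumes "abs_cont_01 f"
  shows "negligible {x \<in> {0..1}. \<not> f differentiable at x}"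
proof -
  obtain G1 G2 :: "real \<Rightarrow> real" where G: "mono G1" "mono G2" "continuous_on UNIV G1" "continuous_on UNIV G2"
    and f: "\<And>x. x \<in> {0..1} \<Longrightarrow> f x = G1 x - G2 x"
    using abs_cont_01_monotone_decomposition[OF assms] by blast
  have "negligible ({0, 1} \<union> {x \<in> {0<..<1}. \<not> G1 differentiable at x} \<union>
      {x \<in> {0<..<1}. \<not> G2 differentiable at x})"
    using mono_differentiable_ae[OF G(1,3)] mono_differentiable_ae[OF G(2,4)] by (intro negligible_Un) auto
  moreover have "f differentiable at x"
    if x: "x \<in> {0<..<1}" and "G1 differentiable at x" "G2 differentiable at x" for x
  proof -
    obtain L1 L2 where "(G1 has_real_derivative L1) (at x)" "(G2 has_real_derivative L2) (at x)"
      using \<open>G1 differentiable at x\<close> \<open>G2 differentiable at x\<close> real_differentiable_def by blast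
    then have "((\<lambda>y. G1 y - G2 y) has_real_derivative L1 - L2) (at x)"
      by (rule DERIV_diff)
    then have "(f has_real_derivative L1 - L2) (at x)"
      by (rule has_field_derivative_transform_within_open[OF _ open_greaterThanLessThan x]) (simp add: f)
    then show ?thesis
      using real_differentiable_def by blast
  qed
  then have "{x \<in> {0..1}. \<not> f differentiable at x} \<subseteq> {0, 1} \<union> {x \<in> {0<..<1}. \<not> G1 differentiable at x} \<union>
      {x \<in> {0<..<1}. \<not> G2 differentiable at x}"
    by force
  ultimately show ?thesis
    using negligible_subset by blast
qed

section \<open>The fundamental theorem of calculus for absolutely continuous functions\<close>

lemma tagged_division_of_real_interval_element:
  assumes "p tagged_division_of {a..b::real}" "(x, K) \<in> p"
  shows "K = {Inf K..Sup K}" "Inf K \<le> x" "x \<le> Sup K" "a \<le> Inf K" "Sup K \<le> b"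
    "measure lborel K = Sup K - Inf K"
proof -
  have "x \<in> K" "K \<subseteq> {a..b}"
    using tagged_division_ofD(2,3)[OF assms] by auto
  moreover obtain u v where "K = cbox u v"
    using tagged_division_ofD(4)[OF assms] by blast
  then have K: "K = {u..v}" by simp
  ultimately have "u \<le> v" "Inf K = u" "Sup K = v"
    by auto
  then show "K = {Inf K..Sup K}" "Inf K \<le> x" "x \<le> Sup K" "a \<le> Inf K" "Sup K \<le> b"
    "measure lborel K = Sup K - Inf K"
    using K \<open>x \<in> K\<close> \<open>K \<subseteq> {a..b}\<close> by auto
qed

lemma straddle_increment_bound:
  fixes f :: "real \<Rightarrow> real"
  assumes "u \<le> x" "x \<le> v"
    and approx: "\<And>y. y \<in> {u..v} \<Longrightarrow> \<bar>f y - f x - D * (y - x)\<bar> \<le> e * \<bar>y - x\<bar>"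
  shows "\<bar>(v - u) * D - (f v - f u)\<bar> \<le> e * (v - u)"
proof -
  have "(v - u) * D - (f v - f u) = (f u - f x - D * (u - x)) - (f v - f x - D * (v - x))"
    by (simp add: algebra_simps)
  also have "\<bar>\<dots>\<bar> \<le> e * (x - u) + e * (v - x)"
    using approx[of u] approx[of v] assms(1,2) by (simp add: abs_triangle_ineq4 add_mono order_trans)
  finally show ?thesis
    by (simp add: algebra_simps)
qed

lemma tagged_division_straddle_sum_bound:
  fixes f f' :: "real \<Rightarrow> real"
  assumes p: "p tagged_division_of {a..b}" and "a \<le> b" "P \<subseteq> p" "0 \<le> e"
    and approx: "\<And>x K y. (x, K) \<in> P \<Longrightarrow> y \<in> K \<Longrightarrow> \<bar>f y - f x - f' x * (y - x)\<bar> \<le> e * \<bar>y - x\<bar>"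
  shows "\<bar>\<Sum>(x, K)\<in>P. measure lborel K * f' x - (f (Sup K) - f (Inf K))\<bar> \<le> e * (b - a)"
proof -
  have "finite p"
    using p by blast
  have "\<bar>measure lborel K * f' x - (f (Sup K) - f (Inf K))\<bar> \<le> e * measure lborel K" if "(x, K) \<in> P" for x K
  proof -
    note K = tagged_division_of_real_interval_element[OF p, of x K]
    show ?thesis
      using straddle_increment_bound[of "Inf K" x "Sup K" f "f' x" e] approx[OF that] K that \<open>P \<subseteq> p\<close>
      by (metis subsetD)
  qed
  then have "\<bar>\<Sum>(x, K)\<in>P. measure lborel K * f' x - (f (Sup K) - f (Inf K))\<bar> \<le> (\<Sum>(x, K)\<in>P. e * measure lborel K)"
    by (intro order.trans[OF sum_abs] sum_mono) auto
  also have "\<dots> \<le> (\<Sum>(x, K)\<in>p. e * measure lborel K)"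
    using \<open>finite p\<close> \<open>P \<subseteq> p\<close> \<open>0 \<le> e\<close> by (intro sum_mono2) auto
  also have "\<dots> = e * (b - a)"
    using additive_content_tagged_division[of p a b] p \<open>a \<le> b\<close> by (simp add: sum_distrib_left[symmetric] split_def)
  finally show ?thesis .
qed

lemma disjoint_open_intervals_ordered:
  fixes u v u' v' :: real
  assumes "{u<..<v} \<inter> {u'<..<v'} = {}" "u < v" "u' < v'"
  shows "v \<le> u' \<or> v' \<le> u"
proof (rule ccontr)
  assume "\<not> ?thesis"
  then have "(max u u' + min v v') / 2 \<in> {u<..<v} \<inter> {u'<..<v'}"
    using assms(2,3) by auto
  with assms(1) show False by blast
qed

lemma tagged_division_nondegenerate_nonoverlapping:
  assumes p: "p tagged_division_of {a..b::real}" and "Q \<subseteq> p" and nondeg: "\<And>i. i \<in> Q \<Longrightarrow> Inf (snd i) < Sup (snd i)"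
  shows "nonoverlapping_intervals a b Q (\<lambda>i. Inf (snd i)) (\<lambda>i. Sup (snd i))"
proof -
  note elem = tagged_division_of_real_interval_element[OF p]
  have "finite Q"
    using p \<open>Q \<subseteq> p\<close> finite_subset by blast
  moreover have "a \<le> Inf (snd i) \<and> Inf (snd i) \<le> Sup (snd i) \<and> Sup (snd i) \<le> b" if "i \<in> Q" for i
    using elem(4,5)[of "fst i" "snd i"] nondeg[OF that] that \<open>Q \<subseteq> p\<close> by auto
  moreover have "Sup (snd i) \<le> Inf (snd j) \<or> Sup (snd j) \<le> Inf (snd i)" if ij: "i \<in> Q" "j \<in> Q" "i \<noteq> j" for i j
  proof -
    have "interior (snd i) \<inter> interior (snd j) = {}"
      using tagged_division_ofD(5)[OF p, of "fst i" "snd i" "fst j" "snd j"] ij \<open>Q \<subseteq> p\<close> by auto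
    moreover have "snd i = {Inf (snd i)..Sup (snd i)}" "snd j = {Inf (snd j)..Sup (snd j)}"
      using elem(1)[of "fst i" "snd i"] elem(1)[of "fst j" "snd j"] ij \<open>Q \<subseteq> p\<close> by auto
    ultimately have "{Inf (snd i)<..<Sup (snd i)} \<inter> {Inf (snd j)<..<Sup (snd j)} = {}"
      by (metis interior_atLeastAtMost_real)
    then show ?thesis
      using disjoint_open_intervals_ordered nondeg ij(1,2) by blast
  qed
  ultimately show ?thesis
    unfolding nonoverlapping_intervals_def by blast
qed

lemma abs_cont_01_tagged_increments_small:
  fixes f :: "real \<Rightarrow> real"
  assumes "abs_cont_01 f" "e > 0"
  obtains d where "d > 0"
    "\<And>p P T. p tagged_division_of {0..1} \<Longrightarrow> P \<subseteq> p \<Longrightarrow> T \<in> lmeasurable \<Longrightarrow> measure lebesgue T < d \<Longrightarrow>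
      (\<And>x K. (x, K) \<in> P \<Longrightarrow> K \<subseteq> T) \<Longrightarrow> \<bar>\<Sum>(x, K)\<in>P. f (Sup K) - f (Inf K)\<bar> < e"
proof -
  obtain d where "d > 0" and d: "\<And>(I :: (real \<times> real set) set) a b. nonoverlapping_intervals 0 1 I a b \<Longrightarrow>
      (\<Sum>i\<in>I. b i - a i) < d \<Longrightarrow> (\<Sum>i\<in>I. \<bar>f (b i) - f (a i)\<bar>) < e"
    using abs_cont_01E[OF assms] by blast
  have "\<bar>\<Sum>(x, K)\<in>P. f (Sup K) - f (Inf K)\<bar> < e"
    if p: "p tagged_division_of {0..1}" and "P \<subseteq> p" "T \<in> lmeasurable" "measure lebesgue T < d"
      and PT: "\<And>x K. (x, K) \<in> P \<Longrightarrow> K \<subseteq> T" for p P T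
  proof -
    define lo where "lo = (\<lambda>i :: real \<times> real set. Inf (snd i))"
    define hi where "hi = (\<lambda>i :: real \<times> real set. Sup (snd i))"
    define Q where "Q = {i \<in> P. lo i < hi i}"
    note elem = tagged_division_of_real_interval_element[OF p]
    have "finite P"
      using p \<open>P \<subseteq> p\<close> finite_subset by blast
    \<comment> \<open>degenerate intervals contribute nothing\<close>
    have "(\<Sum>(x, K)\<in>P. f (Sup K) - f (Inf K)) = (\<Sum>i\<in>P. f (hi i) - f (lo i))"
      unfolding lo_def hi_def by (simp add: split_def)
    also have "\<dots> = (\<Sum>i\<in>Q. f (hi i) - f (lo i))"
    proof (rule sum.mono_neutral_right)
      show "\<forall>i\<in>P - Q. f (hi i) - f (lo i) = 0"
      proof
        fix i
        assume "i \<in> P - Q"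
        then have "lo i \<le> hi i" "\<not> lo i < hi i"
          using elem(2,3)[of "fst i" "snd i"] \<open>P \<subseteq> p\<close> unfolding Q_def lo_def hi_def by force+
        then show "f (hi i) - f (lo i) = 0"
          by simp
      qed
    qed (auto simp: \<open>finite P\<close> Q_def)
    finally have sum_eq: "(\<Sum>(x, K)\<in>P. f (Sup K) - f (Inf K)) = (\<Sum>i\<in>Q. f (hi i) - f (lo i))" .
    have nonoverlapping: "nonoverlapping_intervals 0 1 Q lo hi"
      unfolding lo_def hi_def
      by (rule tagged_division_nondegenerate_nonoverlapping[OF p]) (use \<open>P \<subseteq> p\<close> in \<open>auto simp: Q_def lo_def hi_def\<close>)
    have "{lo i<..<hi i} \<subseteq> T" if "i \<in> Q" for i
    proof -
      have "i \<in> p" "(fst i, snd i) \<in> P"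
        using that \<open>P \<subseteq> p\<close> unfolding Q_def by auto
      then have "snd i = {lo i..hi i}" "snd i \<subseteq> T"
        using elem(1)[of "fst i" "snd i"] PT[of "fst i" "snd i"] unfolding lo_def hi_def by auto
      then show ?thesis
        by auto
    qed
    then have "(\<Sum>i\<in>Q. hi i - lo i) \<le> measure lebesgue T"
      by (rule sum_lengths_le_measure[OF nonoverlapping _ \<open>T \<in> lmeasurable\<close>])
    then have "(\<Sum>i\<in>Q. \<bar>f (hi i) - f (lo i)\<bar>) < e"
      using \<open>measure lebesgue T < d\<close> by (intro d[OF nonoverlapping]) linarith
    then show ?thesis
      using sum_abs[of "\<lambda>i. f (hi i) - f (lo i)" Q] sum_eq by linarith
  qed
  then show ?thesis
    using that[OF \<open>d > 0\<close>] by blast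
qed

lemma negligible_small_open_superset:
  fixes N :: "'a::euclidean_space set"
  assumes "negligible N" "d > 0"
  obtains T where "open T" "N \<subseteq> T" "T \<in> lmeasurable" "measure lebesgue T < d"
proof -
  obtain T where T: "open T" "N \<subseteq> T" "T - N \<in> lmeasurable" "emeasure lebesgue (T - N) < ennreal d"
    using sets_lebesgue_outer_open[OF negligible_imp_sets[OF assms(1)] assms(2)] by blast
  have "T = (T - N) \<union> N"
    using T(2) by blast
  then have "T \<in> lmeasurable" "measure lebesgue T = measure lebesgue (T - N)"
    using T(3) assms(1) negligible_imp_measurable[OF assms(1)]
    by (metis fmeasurable.Un, metis measure_Un_null_set negligible_iff_null_sets fmeasurableD)
  moreover have "measure lebesgue (T - N) < d"
    using T(3,4) assms(2) by (simp add: emeasure_eq_measure2 ennreal_less_iff)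
  ultimately show ?thesis
    using that T(1,2) by simp
qed

lemma tagged_division_derivative_sum_bound:
  fixes f f' :: "real \<Rightarrow> real"
  assumes p: "p tagged_division_of {a..b}" and "a \<le> b" "0 \<le> e"
    and approx: "\<And>x K y. (x, K) \<in> p \<Longrightarrow> x \<notin> N \<Longrightarrow> y \<in> K \<Longrightarrow>
      \<bar>f y - f x - f' x * (y - x)\<bar> \<le> e * \<bar>y - x\<bar>"
    and exceptional: "\<bar>\<Sum>(x, K)\<in>{(x, K) \<in> p. x \<in> N}. f (Sup K) - f (Inf K)\<bar> < e'"
  shows "\<bar>(\<Sum>(x, K)\<in>p. measure lborel K * (if x \<in> N then 0 else f' x)) - (f b - f a)\<bar> < e * (b - a) + e'"
proof -
  define h where "h = (\<lambda>(x, K). measure lborel K * (if x \<in> N then 0 else f' x) - (f (Sup K) - f (Inf K)))"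
  have "finite p"
    using p by blast
  have "p \<inter> {(x, K). x \<notin> N} = {(x, K) \<in> p. x \<notin> N}" "p - {(x, K). x \<notin> N} = {(x, K) \<in> p. x \<in> N}"
    by auto
  then have "(\<Sum>(x, K)\<in>p. measure lborel K * (if x \<in> N then 0 else f' x)) - (f b - f a) =
      sum h {(x, K) \<in> p. x \<notin> N} + sum h {(x, K) \<in> p. x \<in> N}"
    using additive_tagged_division_1[OF \<open>a \<le> b\<close> p, of f] sum.Int_Diff[OF \<open>finite p\<close>, of h "{(x, K). x \<notin> N}"]
    unfolding h_def by (simp add: sum_subtractf split_def)
  moreover have "sum h {(x, K) \<in> p. x \<notin> N} =
      (\<Sum>(x, K)\<in>{(x, K) \<in> p. x \<notin> N}. measure lborel K * f' x - (f (Sup K) - f (Inf K)))"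
    unfolding h_def by (intro sum.cong) auto
  moreover have "sum h {(x, K) \<in> p. x \<in> N} = - (\<Sum>(x, K)\<in>{(x, K) \<in> p. x \<in> N}. f (Sup K) - f (Inf K))"
    unfolding h_def by (simp add: sum_negf[symmetric] split_def)
  moreover have "\<bar>\<Sum>(x, K)\<in>{(x, K) \<in> p. x \<notin> N}. measure lborel K * f' x - (f (Sup K) - f (Inf K))\<bar> \<le> e * (b - a)"
    using approx by (intro tagged_division_straddle_sum_bound[OF p \<open>a \<le> b\<close> _ \<open>0 \<le> e\<close>]) auto
  ultimately show ?thesis
    using exceptional by linarith
qed

lemma derivative_gauge:
  fixes f f' :: "real \<Rightarrow> real"
  assumes "open T" "N \<subseteq> T" "e > 0"
    and deriv: "\<And>x. x \<in> S - N \<Longrightarrow> (f has_real_derivative f' x) (at x)"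
  obtains \<gamma> where "gauge \<gamma>" "\<And>x. x \<in> N \<Longrightarrow> \<gamma> x \<subseteq> T"
    "\<And>x y. x \<in> S - N \<Longrightarrow> y \<in> \<gamma> x \<Longrightarrow> \<bar>f y - f x - f' x * (y - x)\<bar> \<le> e * \<bar>y - x\<bar>"
proof -
  have "\<forall>x\<in>S - N. \<exists>r>0. \<forall>y. \<bar>y - x\<bar> < r \<longrightarrow> \<bar>f y - f x - f' x * (y - x)\<bar> \<le> e * \<bar>y - x\<bar>"
    using deriv \<open>e > 0\<close> unfolding has_field_derivative_def has_derivative_at_alt by simp
  then obtain \<eta> where \<eta>: "\<And>x. x \<in> S - N \<Longrightarrow> \<eta> x > 0 \<and>
      (\<forall>y. \<bar>y - x\<bar> < \<eta> x \<longrightarrow> \<bar>f y - f x - f' x * (y - x)\<bar> \<le> e * \<bar>y - x\<bar>)"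
    by metis
  have "\<forall>x\<in>N. \<exists>r>0. ball x r \<subseteq> T"
    using assms(1,2) open_contains_ball by blast
  then obtain \<rho> where \<rho>: "\<And>x. x \<in> N \<Longrightarrow> \<rho> x > 0 \<and> ball x (\<rho> x) \<subseteq> T"
    by metis
  define \<gamma> where "\<gamma> x = ball x (if x \<in> N then \<rho> x else if x \<in> S then \<eta> x else 1)" for x
  have "gauge \<gamma>"
    unfolding gauge_def \<gamma>_def using \<eta> \<rho> by auto
  moreover have "\<bar>f y - f x - f' x * (y - x)\<bar> \<le> e * \<bar>y - x\<bar>" if "x \<in> S - N" "y \<in> \<gamma> x" for x y
    using that \<eta>[OF that(1)] unfolding \<gamma>_def by (auto simp: dist_real_def abs_minus_commute)
  moreover have "\<gamma> x \<subseteq> T" if "x \<in> N" for x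
    using \<rho>[OF that] that unfolding \<gamma>_def by auto
  ultimately show ?thesis
    using that by blast
qed

lemma abs_cont_01_has_integral_derivative:
  fixes f f' :: "real \<Rightarrow> real"
  assumes ac: "abs_cont_01 f" and N: "negligible N"
    and deriv: "\<And>x. x \<in> {0..1} - N \<Longrightarrow> (f has_real_derivative f' x) (at x)"
  shows "(f' has_integral (f 1 - f 0)) {0..1}"
proof -
  define g where "g x = (if x \<in> N then 0 else f' x)" for x
  have "(g has_integral (f 1 - f 0)) {0..1}"
    unfolding has_integral_real
  proof (intro allI impI)
    fix e :: real
    assume "e > 0"
    then have "e / 2 > 0"
      by simp
    then obtain d where "d > 0" and small: "\<And>p P T. p tagged_division_of {0..1} \<Longrightarrow> P \<subseteq> p \<Longrightarrow> T \<in> lmeasurable \<Longrightarrow>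
        measure lebesgue T < d \<Longrightarrow> (\<And>x K. (x, K) \<in> P \<Longrightarrow> K \<subseteq> T) \<Longrightarrow>
        \<bar>\<Sum>(x, K)\<in>P. f (Sup K) - f (Inf K)\<bar> < e / 2"
      using abs_cont_01_tagged_increments_small[OF ac] by blast
    obtain T where T: "open T" "N \<subseteq> T" "T \<in> lmeasurable" "measure lebesgue T < d"
      using negligible_small_open_superset[OF N \<open>d > 0\<close>] by blast
    obtain \<gamma> where "gauge \<gamma>" and \<gamma>_N: "\<And>x. x \<in> N \<Longrightarrow> \<gamma> x \<subseteq> T"
      and \<gamma>_approx: "\<And>x y. x \<in> {0..1} - N \<Longrightarrow> y \<in> \<gamma> x \<Longrightarrow>
        \<bar>f y - f x - f' x * (y - x)\<bar> \<le> e / 2 * \<bar>y - x\<bar>"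
      using derivative_gauge[OF T(1,2) \<open>e / 2 > 0\<close> deriv] by blast
    have "\<bar>(\<Sum>(x, K)\<in>p. measure lborel K * g x) - (f 1 - f 0)\<bar> < e"
      if p: "p tagged_division_of {0..1}" and fine: "\<gamma> fine p" for p
    proof -
      have K: "x \<in> {0..1}" "K \<subseteq> \<gamma> x" if "(x, K) \<in> p" for x K
        using fine tagged_division_ofD(2,3)[OF p that] that unfolding fine_def by blast+
      have "\<bar>\<Sum>(x, K)\<in>{(x, K) \<in> p. x \<in> N}. f (Sup K) - f (Inf K)\<bar> < e / 2"
        by (rule small[OF p _ T(3,4)]) (use K(2) \<gamma>_N in blast)+
      moreover have "\<bar>f y - f x - f' x * (y - x)\<bar> \<le> e / 2 * \<bar>y - x\<bar>"
        if "(x, K) \<in> p" "x \<notin> N" "y \<in> K" for x K y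
        using \<gamma>_approx K[OF that(1)] that(2,3) by blast
      ultimately show ?thesis
        using tagged_division_derivative_sum_bound[OF p zero_le_one, of "e / 2" N f f' "e / 2"] \<open>e > 0\<close>
        unfolding g_def by simp
    qed
    then show "\<exists>\<gamma>. gauge \<gamma> \<and> (\<forall>p. p tagged_division_of {0..1} \<and> \<gamma> fine p \<longrightarrow>
        norm ((\<Sum>(x, K)\<in>p. measure lborel K *\<^sub>R g x) - (f 1 - f 0)) < e)"
      using \<open>gauge \<gamma>\<close> by auto
  qed
  then show ?thesis
    by (rule has_integral_spike[OF N, rotated]) (simp add: g_def)
qed

lemma has_integral_square_deriv_diff_linear:
  fixes f :: "real \<Rightarrow> real"
  assumes ac: "abs_cont_01 f" and sq: "(\<lambda>u. (deriv f u)\<^sup>2) integrable_on {0..1}"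
  shows "((\<lambda>u. (deriv (\<lambda>x. f x - x * c) u)\<^sup>2) has_integral Gamma01 f - 2 * c * (f 1 - f 0) + c\<^sup>2) {0..1}"
proof -
  define N where "N = {x \<in> {0..1}. \<not> f differentiable at x}"
  have N: "negligible N"
    using abs_cont_01_differentiable_ae[OF ac] unfolding N_def .
  have Df: "(f has_real_derivative deriv f x) (at x)" if "x \<in> {0..1} - N" for x
    using that DERIV_deriv_iff_real_differentiable unfolding N_def by blast
  \<comment> \<open>\<open>deriv\<close> is an arbitrary choice where \<open>f\<close> is not differentiable, hence the exceptional set \<open>N\<close>\<close>
  then have deriv_eq: "deriv (\<lambda>x. f x - x * c) x = deriv f x - c" if "x \<in> {0..1} - N" for x
    using that by (intro DERIV_imp_deriv derivative_eq_intros) auto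
  have square_eq: "(deriv (\<lambda>x. f x - x * c) x)\<^sup>2 = (deriv f x)\<^sup>2 - 2 * c * deriv f x + c\<^sup>2" if "x \<in> {0..1} - N" for x
    unfolding deriv_eq[OF that] by (simp add: power2_diff)
  have "((\<lambda>u. (deriv f u)\<^sup>2 - 2 * c * deriv f u + c\<^sup>2) has_integral Gamma01 f - 2 * c * (f 1 - f 0) + c\<^sup>2) {0..1}"
    using abs_cont_01_has_integral_derivative[OF ac N Df] sq has_integral_const_real[of "c\<^sup>2" 0 1]
    unfolding Gamma01_def by (intro has_integral_add has_integral_diff has_integral_mult_right) auto
  then show ?thesis
    by (rule has_integral_spike[OF N square_eq, rotated])
qed

section \<open>Hulls under affine perturbations\<close>

lemma lcm01_add_affine:
  fixes f l :: "real \<Rightarrow> real"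
  assumes "bdd_above (f ` {0..1})" "convex_on {0..1} l" "concave_on {0..1} l" "u \<in> {0..1}"
  shows "lcm01 (\<lambda>x. f x + l x) u = lcm01 f u + l u"
proof -
  define S where "S = {g u |g. concave_on {0..1} g \<and> (\<forall>x\<in>{0..1}. f x \<le> g x)}"
  have shift: "{g u |g. concave_on {0..1} g \<and> (\<forall>x\<in>{0..1}. f x + l x \<le> g x)} = (\<lambda>t. l u + t) ` S"
  proof (intro equalityI subsetI)
    fix t
    assume "t \<in> {g u |g. concave_on {0..1} g \<and> (\<forall>x\<in>{0..1}. f x + l x \<le> g x)}"
    then obtain g where g: "t = g u" "concave_on {0..1} g" "\<forall>x\<in>{0..1}. f x + l x \<le> g x"
      by blast
    then have "concave_on {0..1} (\<lambda>x. g x - l x) \<and> (\<forall>x\<in>{0..1}. f x \<le> g x - l x)"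
      using concave_on_diff assms(2) by fastforce
    then have "g u - l u \<in> S"
      unfolding S_def by (intro CollectI exI[of _ "\<lambda>x. g x - l x"]) simp
    then show "t \<in> (\<lambda>t. l u + t) ` S"
      using g(1) by (intro image_eqI[of _ _ "g u - l u"]) auto
  next
    fix t
    assume "t \<in> (\<lambda>t. l u + t) ` S"
    then obtain g where g: "t = l u + g u" "concave_on {0..1} g" "\<forall>x\<in>{0..1}. f x \<le> g x"
      unfolding S_def by blast
    then have "concave_on {0..1} (\<lambda>x. g x + l x) \<and> (\<forall>x\<in>{0..1}. f x + l x \<le> g x + l x)"
      using concave_on_add assms(3) by fastforce
    then show "t \<in> {g u |g. concave_on {0..1} g \<and> (\<forall>x\<in>{0..1}. f x + l x \<le> g x)}"
      using g(1) by (intro CollectI exI[of _ "\<lambda>x. g x + l x"]) (simp add: add.commute)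
  qed
  obtain M where "\<forall>x\<in>{0..1}. f x \<le> M"
    using assms(1) unfolding bdd_above_def by blast
  then have "M \<in> S"
    unfolding S_def using concave_on_const by (intro CollectI exI[of _ "\<lambda>_. M"]) auto
  moreover have "bdd_below S"
    unfolding S_def using assms(4) by (intro bdd_belowI[of _ "f u"]) blast
  ultimately show ?thesis
    unfolding lcm01_def shift S_def[symmetric] using Inf_add_eq[of "\<lambda>t. t" S "l u"] by (auto simp: add.commute)
qed

lemma gcm01_eq_uminus_lcm01: "gcm01 f u = - lcm01 (\<lambda>x. - f x) u"
proof -
  have "{g u |g. concave_on {0..1} g \<and> (\<forall>x\<in>{0..1}. - f x \<le> g x)} =
      uminus ` {g u |g. convex_on {0..1} g \<and> (\<forall>x\<in>{0..1}. g x \<le> f x)}"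
  proof (intro equalityI subsetI)
    fix t
    assume "t \<in> {g u |g. concave_on {0..1} g \<and> (\<forall>x\<in>{0..1}. - f x \<le> g x)}"
    then obtain g where "t = g u" "convex_on {0..1} (\<lambda>x. - g x)" "\<forall>x\<in>{0..1}. - g x \<le> f x"
      unfolding concave_on_def by force
    then show "t \<in> uminus ` {g u |g. convex_on {0..1} g \<and> (\<forall>x\<in>{0..1}. g x \<le> f x)}"
      by (intro image_eqI[of _ _ "- g u"]) auto
  next
    fix t
    assume "t \<in> uminus ` {g u |g. convex_on {0..1} g \<and> (\<forall>x\<in>{0..1}. g x \<le> f x)}"
    then obtain g where "t = - g u" "concave_on {0..1} (\<lambda>x. - g x)" "\<forall>x\<in>{0..1}. - f x \<le> - g x"
      unfolding concave_on_def by force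
    then show "t \<in> {g u |g. concave_on {0..1} g \<and> (\<forall>x\<in>{0..1}. - f x \<le> g x)}"
      by (intro CollectI exI[of _ "\<lambda>x. - g x"]) simp
  qed
  then show ?thesis
    unfolding gcm01_def lcm01_def Inf_real_def by (simp add: image_image)
qed

lemma gcm01_add_affine:
  fixes f l :: "real \<Rightarrow> real"
  assumes "bdd_below (f ` {0..1})" "convex_on {0..1} l" "concave_on {0..1} l" "u \<in> {0..1}"
  shows "gcm01 (\<lambda>x. f x + l x) u = gcm01 f u + l u"
proof -
  have "convex_on {0..1} (\<lambda>x. - l x)" "concave_on {0..1} (\<lambda>x. - l x)"
    using assms(2,3) unfolding concave_on_def by simp_all
  then have "lcm01 (\<lambda>x. - f x + - l x) u = lcm01 (\<lambda>x. - f x) u - l u"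
    using lcm01_add_affine[of "\<lambda>x. - f x" "\<lambda>x. - l x" u] assms(1,4) by (simp add: bdd_above_uminus_image)
  then show ?thesis
    unfolding gcm01_eq_uminus_lcm01[of _ u] by simp
qed

lemma A01_add_affine:
  fixes f l :: "real \<Rightarrow> real"
  assumes "bounded (f ` {0..1})" "convex_on {0..1} l" "concave_on {0..1} l"
  shows "A01 (\<lambda>x. f x + l x) = A01 f"
  unfolding A01_def using assms
  by (intro integral_cong) (simp add: lcm01_add_affine gcm01_add_affine bounded_imp_bdd_above bounded_imp_bdd_below)

theorem lemma5p4:
  fixes f :: "real \<Rightarrow> real"
  assumes "f \<in> classA"
  defines "fhat \<equiv> (\<lambda>u. f u - u * f 1)"
  shows "fhat \<in> classB \<and> A01 fhat = A01 f \<and> Gamma01 fhat \<le> Gamma01 f \<and>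
         (Gamma01 fhat = Gamma01 f \<longleftrightarrow> f 1 = 0)"
proof -
  have ac: "abs_cont_01 f" and "f 0 = 0" and sq: "(\<lambda>u. (deriv f u)\<^sup>2) integrable_on {0..1}"
    using assms(1) unfolding classA_def by auto
  have Gamma: "((\<lambda>u. (deriv fhat u)\<^sup>2) has_integral Gamma01 f - (f 1)\<^sup>2) {0..1}"
    using has_integral_square_deriv_diff_linear[OF ac sq, of "f 1"] \<open>f 0 = 0\<close>
    unfolding fhat_def by (simp add: power2_eq_square)
  then have "fhat \<in> classB"
    using abs_cont_01_diff_linear[OF ac, of "f 1"] \<open>f 0 = 0\<close>
    unfolding classB_def classA_def fhat_def by auto
  moreover have "A01 fhat = A01 f"
  proof -
    have "bounded (f ` {0..1})"
      using abs_cont_01_imp_continuous_on[OF ac] by (intro compact_imp_bounded compact_continuous_image) auto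
    moreover have "convex_on {0..1} (\<lambda>x. - (x * f 1))" "concave_on {0..1} (\<lambda>x. - (x * f 1))"
      by (auto simp: concave_on_def convex_on_def algebra_simps)
    ultimately show ?thesis
      using A01_add_affine[of f "\<lambda>x. - (x * f 1)"] unfolding fhat_def by simp
  qed
  moreover have "Gamma01 fhat = Gamma01 f - (f 1)\<^sup>2"
    unfolding Gamma01_def[of fhat] using Gamma by (rule integral_unique)
  ultimately show ?thesis
    by simp
qed

end
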